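(* Let $\epsilon\in(0,1)$, $u_0\in\mathbb{R}$, $h>0$, and let $(u_n)_{n\ge0}$ be a sequence of real numbers starting at $u_0$ and satisfying the convex-splitting modified Crank–Nicolson scheme $$\frac{u_n-u_{n-1}}{h}+\frac{1}{\epsilon^2}\left(\frac{u_n+u_{n-1}}{2}\right)\left(\frac{u_n^2+u_{n-1}^2}{2}\right)-\frac{1}{\epsilon^2}u_{n-1}=0,\qquad n\ge1.$$ (i) If $u_0\in\{0,1,-1\}$, then $u_n=\mathrm{sign}(u_0)$ for all $n\ge1$, for any $h>0$ and any $\epsilon$. (ii) If $u_0\notin\{0,1,-1\}$, define $h^*=h^*(u_0,\epsilon)=\frac{4\epsilon^2}{u_0^2+2|u_0|-1}$ if $|u_0|>1$ and $h^*=2\epsilon^2$ if $0<|u_0|<1$. Then $h^*>0$ and for every $h\in(0,h^*]$ the sequence $(u_n)$ is monotone and converges to $\mathrm{sign}(u_0)$ as $n\to\infty$.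
   Context: The scheme discretizes the ODE $u'(t)+\frac{1}{\epsilon^2}(u^3-u)=0$, $u(0)=u_0$. For every $h>0$ each step equation has a unique real solution $u_n$. Here $\mathrm{sign}(0)=0$. *)

theory Defs
  imports "HOL-Analysis.Analysis"
begin

text \<open>Convex-splitting modified Crank--Nicolson step residual for
  u' + (u^3 - u)/eps^2 = 0: the step from v = u_{n-1} to w = u_n.\<close>
definition cs_mcn_step :: "real \<Rightarrow> real \<Rightarrow> real \<Rightarrow> real \<Rightarrow> bool" where
  "cs_mcn_step eps h v w \<longleftrightarrow>
     (w - v) / h + (1 / eps^2) * ((w + v) / 2) * ((w^2 + v^2) / 2) - (1 / eps^2) * v = 0"

definition h_star :: "real \<Rightarrow> real \<Rightarrow> real" where
  "h_star u0 eps = (if \<bar>u0\<bar> > 1 then 4 * eps^2 / (u0^2 + 2 * \<bar>u0\<bar> - 1) else 2 * eps^2)"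

end

theory Submission
  imports Defs
begin

text \<open>Multiplied by \<open>h\<close>, a step from \<open>v\<close> to \<open>w\<close> reads \<open>R\<^sub>k(v, w) = 0\<close> with
  \<open>k = h / eps\<^sup>2\<close>, and \<open>R\<^sub>k(v, -)\<close> is strictly increasing, so the next iterate is located by
  the signs of \<open>R\<^sub>k(v, v) = k (v\<^sup>3 - v)\<close> and of \<open>R\<^sub>k(v, 1)\<close>. In particular the
  roots \<open>-1, 0, 1\<close> of \<open>v\<^sup>3 = v\<close> are equilibria of the scheme. For \<open>0 < v < 1\<close> and \<open>k \<le> 2\<close> the
  next iterate lies in \<open>(v, 1)\<close>; for \<open>1 \<le> v \<le> u\<^sub>0\<close> and \<open>k (u\<^sub>0\<^sup>2 + 2 u\<^sub>0 - 1) \<le> 4\<close> it lies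
  in \<open>[1, v]\<close>. The condition \<open>h \<le> h*\<close> is exactly this bound on \<open>k\<close>. Hence the orbit is
  monotone and bounded, and its limit is a positive root of \<open>L\<^sup>3 = L\<close>, i.e. \<open>1\<close>.
  Negative initial values follow by the odd symmetry of the scheme.\<close>

definition mcn_residual :: "real \<Rightarrow> real \<Rightarrow> real \<Rightarrow> real" where
  "mcn_residual k v w = (w - v) + k * ((w + v) * (w^2 + v^2) / 4 - v)"

lemma cs_mcn_step_iff_residual:
  assumes "eps \<noteq> 0" "h \<noteq> 0"
  shows "cs_mcn_step eps h v w \<longleftrightarrow> mcn_residual (h / eps^2) v w = 0"
proof -
  have "h * ((w - v) / h + (1 / eps^2) * ((w + v) / 2) * ((w^2 + v^2) / 2) - (1 / eps^2) * v)
      = mcn_residual (h / eps^2) v w"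
    unfolding mcn_residual_def using assms by (simp add: field_simps)
  then show ?thesis
    unfolding cs_mcn_step_def using assms by (metis mult_eq_0_iff)
qed

lemma mcn_residual_diff:
  "mcn_residual k v b - mcn_residual k v a
     = (b - a) * (1 + k * ((a + b)^2 + (a + v)^2 + (b + v)^2) / 8)"
  unfolding mcn_residual_def by (simp add: power2_eq_square field_simps)

lemma strict_mono_mcn_residual:
  assumes "0 \<le> k"
  shows "strict_mono (mcn_residual k v)"
proof (rule strict_monoI)
  fix a b :: real
  assume "a < b"
  have "0 \<le> k * ((a + b)^2 + (a + v)^2 + (b + v)^2) / 8"
    using assms by simp
  then have "0 < (b - a) * (1 + k * ((a + b)^2 + (a + v)^2 + (b + v)^2) / 8)"
    using \<open>a < b\<close> by (intro mult_pos_pos) auto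
  then show "mcn_residual k v a < mcn_residual k v b"
    using mcn_residual_diff[of k v b a] by simp
qed

lemma mcn_residual_root_iff:
  assumes "0 \<le> k" "mcn_residual k v w = 0"
  shows mcn_residual_root_less_iff: "a < w \<longleftrightarrow> mcn_residual k v a < 0"
    and mcn_residual_root_le_iff: "a \<le> w \<longleftrightarrow> mcn_residual k v a \<le> 0"
    and mcn_residual_root_unique: "mcn_residual k v a = 0 \<longleftrightarrow> a = w"
  using strict_mono_less[OF strict_mono_mcn_residual[OF assms(1), of v], of a w]
    strict_mono_less_eq[OF strict_mono_mcn_residual[OF assms(1), of v], of a w]
    strict_mono_eq[OF strict_mono_mcn_residual[OF assms(1), of v], of a w] assms(2)
  by auto

lemma mcn_residual_diag: "mcn_residual k v v = k * (v^3 - v)"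
  unfolding mcn_residual_def by (simp add: power2_eq_square power3_eq_cube algebra_simps)

lemma mcn_residual_at_one: "mcn_residual k v 1 = (1 - v) * (4 + k * (1 - 2 * v - v^2)) / 4"
  unfolding mcn_residual_def by (simp add: power2_eq_square algebra_simps)

lemma mcn_residual_uminus: "mcn_residual k (-v) (-w) = - mcn_residual k v w"
  unfolding mcn_residual_def by (simp add: power2_eq_square field_simps)

lemma mcn_step_below_one:
  assumes "0 < k" "k \<le> 2" "0 < v" "v < 1" "mcn_residual k v w = 0"
  shows "v < w \<and> w < 1"
proof
  have "v^3 < v"
    using assms(3,4) power_strict_decreasing[of 1 3 v] by (simp add: power3_eq_cube)
  then have "mcn_residual k v v < 0"
    using assms(1) by (simp add: mcn_residual_diag mult_pos_neg)
  then show "v < w"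
    using mcn_residual_root_less_iff[OF _ assms(5)] assms(1) by simp
  have "v^2 < 1"
    using assms(3,4) by (simp add: power_less_one_iff)
  then have "k * (-2) < k * (1 - 2 * v - v^2)"
    using assms(1,4) by (intro mult_strict_left_mono) auto
  then have "0 < mcn_residual k v 1"
    using assms(2,4) by (simp add: mcn_residual_at_one)
  then show "w < 1"
    using mcn_residual_root_le_iff[OF _ assms(5), of 1] assms(1) by linarith
qed

lemma mcn_step_above_one:
  assumes "0 < k" "k * (a^2 + 2 * a - 1) \<le> 4" "1 \<le> v" "v \<le> a" "mcn_residual k v w = 0"
  shows "1 \<le> w \<and> w \<le> v"
proof
  have "v \<le> v^3"
    using assms(3) power_increasing[of 1 3 v] by simp
  then have "0 \<le> mcn_residual k v v"
    using assms(1) by (simp add: mcn_residual_diag)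
  then show "w \<le> v"
    using mcn_residual_root_less_iff[OF _ assms(5), of v] assms(1) by linarith
  have "v^2 \<le> a^2"
    using assms(3,4) by (intro power_mono) auto
  then have "k * (v^2 + 2 * v - 1) \<le> k * (a^2 + 2 * a - 1)"
    using assms(1,4) by (intro mult_left_mono) auto
  then have "0 \<le> 4 + k * (1 - 2 * v - v^2)"
    using assms(2) by (simp add: algebra_simps)
  then have "(1 - v) * (4 + k * (1 - 2 * v - v^2)) \<le> 0"
    using assms(3) by (simp add: mult_nonpos_nonneg)
  then have "mcn_residual k v 1 \<le> 0"
    by (simp add: mcn_residual_at_one)
  then show "1 \<le> w"
    using mcn_residual_root_le_iff[OF _ assms(5), of 1] assms(1) by simp
qed

lemma mcn_orbit_equilibrium:
  assumes "0 \<le> k" "a \<in> {-1, 0, 1}" "u 0 = a"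
    and step: "\<And>n. mcn_residual k (u n) (u (Suc n)) = 0"
  shows "u n = a"
proof (induction n)
  case 0
  show ?case using assms(3) .
next
  case (Suc n)
  have "mcn_residual k a a = 0"
    using assms(2) by (auto simp: mcn_residual_diag)
  then show ?case
    using mcn_residual_root_unique[OF assms(1) step[of n]] Suc by simp
qed

lemma mcn_limit_equilibrium:
  fixes u :: "nat \<Rightarrow> real"
  assumes "u \<longlonglongrightarrow> L" "0 < k"
    and step: "\<And>n. mcn_residual k (u n) (u (Suc n)) = 0"
  shows "L \<in> {-1, 0, 1}"
proof -
  have "(\<lambda>n. mcn_residual k (u n) (u (Suc n))) \<longlonglongrightarrow> mcn_residual k L L"
    unfolding mcn_residual_def using assms(1) LIMSEQ_Suc[OF assms(1)]
    by (intro tendsto_intros) auto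
  then have "mcn_residual k L L = 0"
    using step by (simp add: LIMSEQ_const_iff)
  then have "L * (L - 1) * (L + 1) = 0"
    using assms(2) by (simp add: mcn_residual_diag power3_eq_cube algebra_simps)
  then show ?thesis
    by auto
qed

lemma mcn_orbit_below_one:
  fixes u :: "nat \<Rightarrow> real"
  assumes "0 < k" "k \<le> 2" "0 < u 0" "u 0 < 1"
    and step: "\<And>n. mcn_residual k (u n) (u (Suc n)) = 0"
  shows "incseq u \<and> u \<longlonglongrightarrow> 1"
proof -
  have bounds: "u 0 \<le> u n \<and> u n < 1" for n
  proof (induction n)
    case (Suc n)
    then show ?case
      using mcn_step_below_one[OF assms(1,2) _ _ step, of n] assms(3) by force
  qed (use assms(4) in simp)
  have "incseq u"
    using mcn_step_below_one[OF assms(1,2) _ _ step] bounds assms(3)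
    by (intro incseq_SucI) (meson less_imp_le order_less_le_trans)
  moreover obtain L where L: "u \<longlonglongrightarrow> L" "\<forall>n. u n \<le> L"
    using incseq_convergent[OF \<open>incseq u\<close>, of 1] bounds less_imp_le by blast
  moreover have "0 < L"
    using L(2) assms(3) by (meson order_less_le_trans)
  then have "L = 1"
    using mcn_limit_equilibrium[OF L(1) assms(1) step] by auto
  ultimately show ?thesis
    by simp
qed

lemma mcn_orbit_above_one:
  fixes u :: "nat \<Rightarrow> real"
  assumes "0 < k" "k * ((u 0)^2 + 2 * u 0 - 1) \<le> 4" "1 < u 0"
    and step: "\<And>n. mcn_residual k (u n) (u (Suc n)) = 0"
  shows "decseq u \<and> u \<longlonglongrightarrow> 1"
proof -
  have bounds: "1 \<le> u n \<and> u n \<le> u 0" for n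
  proof (induction n)
    case (Suc n)
    then show ?case
      using mcn_step_above_one[OF assms(1,2) _ _ step, of n] by force
  qed (use assms(3) in simp)
  have "decseq u"
    using mcn_step_above_one[OF assms(1,2) _ _ step] bounds by (intro decseq_SucI) blast
  moreover obtain L where L: "u \<longlonglongrightarrow> L" "\<forall>n. L \<le> u n"
    using decseq_convergent[OF \<open>decseq u\<close>, of 1] bounds by blast
  moreover have "1 \<le> L"
    using LIMSEQ_le_const[OF L(1)] bounds by blast
  then have "L = 1"
    using mcn_limit_equilibrium[OF L(1) assms(1) step] by auto
  ultimately show ?thesis
    by simp
qed

lemma h_star_scale: "h_star a eps = eps^2 * h_star a 1"
  by (simp add: h_star_def)

lemma h_star_uminus: "h_star (-a) eps = h_star a eps"
  by (simp add: h_star_def)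

lemma h_star_pos:
  assumes "eps \<noteq> 0"
  shows "0 < h_star a eps"
proof (cases "\<bar>a\<bar> > 1")
  case True
  then have "0 < a^2 + 2 * \<bar>a\<bar> - 1"
    using zero_le_power2[of a] by linarith
  then show ?thesis
    using True assms by (simp add: h_star_def)
qed (use assms in \<open>simp add: h_star_def\<close>)

lemma mcn_orbit_pos:
  fixes u :: "nat \<Rightarrow> real"
  assumes "0 < k" "k \<le> h_star (u 0) 1" "0 < u 0" "u 0 \<noteq> 1"
    and step: "\<And>n. mcn_residual k (u n) (u (Suc n)) = 0"
  shows "monoseq u \<and> u \<longlonglongrightarrow> 1"
proof (cases "u 0 < 1")
  case True
  then have "k \<le> 2"
    using assms(2,3) by (simp add: h_star_def)
  then show ?thesis
    using mcn_orbit_below_one[OF assms(1) _ assms(3) True step] by (simp add: monoseq_iff)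
next
  case False
  then have "1 < u 0" "0 < (u 0)^2 + 2 * u 0 - 1"
    using assms(3,4) zero_le_power2[of "u 0"] by linarith+
  then have "k * ((u 0)^2 + 2 * u 0 - 1) \<le> 4"
    using assms(2) by (simp add: h_star_def le_divide_eq)
  then show ?thesis
    using mcn_orbit_above_one[OF assms(1) _ \<open>1 < u 0\<close> step] by (simp add: monoseq_iff)
qed

theorem theorem3p10:
  fixes eps u0 h :: real and u :: "nat \<Rightarrow> real"
  assumes eps: "0 < eps" "eps < 1"
    and h: "0 < h"
    and init: "u 0 = u0"
    and scheme: "\<And>n. n \<ge> 1 \<Longrightarrow> cs_mcn_step eps h (u (n - 1)) (u n)"
  shows "(u0 \<in> {0, 1, -1} \<longrightarrow> (\<forall>n\<ge>1. u n = sgn u0))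
       \<and> (u0 \<notin> {0, 1, -1} \<longrightarrow>
            h_star u0 eps > 0 \<and>
            (h \<le> h_star u0 eps \<longrightarrow> (mono u \<or> antimono u) \<and> u \<longlonglongrightarrow> sgn u0))"
proof (intro conjI impI allI)
  define k where "k = h / eps^2"
  have k: "0 < k"
    unfolding k_def using eps h by simp
  have step: "mcn_residual k (u n) (u (Suc n)) = 0" for n
    using scheme[of "Suc n"] cs_mcn_step_iff_residual[of eps h] eps h unfolding k_def by simp
  show "u n = sgn u0" if "u0 \<in> {0, 1, -1}" for n
    using mcn_orbit_equilibrium[of k u0 u, OF _ _ init step] k that by (auto simp: sgn_if)
  show "0 < h_star u0 eps"
    using eps by (simp add: h_star_pos)
  assume u0: "u0 \<notin> {0, 1, -1}" and "h \<le> h_star u0 eps"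
  then have hk: "k \<le> h_star u0 1"
    using eps unfolding k_def by (subst (asm) h_star_scale) (simp add: field_simps)
  have "monoseq u \<and> u \<longlonglongrightarrow> sgn u0"
  proof (cases "0 < u0")
    case True
    then show ?thesis
      using mcn_orbit_pos[of k u, OF k _ _ _ step] hk u0 init by auto
  next
    case False
    have "mcn_residual k (- u n) (- u (Suc n)) = 0" for n
      using step[of n] by (simp add: mcn_residual_uminus)
    then have "monoseq (\<lambda>n. - u n) \<and> (\<lambda>n. - u n) \<longlonglongrightarrow> 1"
      using mcn_orbit_pos[of k "\<lambda>n. - u n", OF k] hk u0 False init
      by (auto simp: h_star_uminus)
    then show ?thesis
      using monoseq_minus[of "\<lambda>n. - u n"] tendsto_minus[of "\<lambda>n. - u n" 1] False u0 by auto
  qed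
  then show "mono u \<or> antimono u" "u \<longlonglongrightarrow> sgn u0"
    by (simp_all add: monoseq_iff)
qed

end
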